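(* Let $\tau\in\mathbb R$ and let $(\vartheta(s),\omega(s))$, $s\in J$ ($J$ an interval containing $0$), be a $C^1$ solution with $\vartheta(s)\in(-\pi/2,\pi/2)$ of $\dot\vartheta=\omega$, $\dot\omega=-\tau^2\tan\vartheta/\cos^2\vartheta$ with $\vartheta(0)=0$; let $E\ge0$ with $E^2=\omega^2+\tau^2\tan^2\vartheta$ (constant along the solution), assume $E^2+\tau^2>0$ and put $\Omega=\sqrt{E^2+\tau^2}$. Let $\varphi(s)$ satisfy $\dot\varphi(s)=\tau\tan^2\vartheta(s)$ on $J$. Then $$\varphi(s)-\varphi(0)=A(s)-\tau s\qquad(s\in J),$$ where $A$ is the continuous function on $J$ with $A(0)=0$ and $\tan A(s)=\frac{\tau}{\Omega}\tan(\Omega s)$ whenever $\cos(\Omega s)\ne0$ (i.e. $A(s)=\tan^{-1}\big(\frac{\tau}{\Omega}\tan\Omega s\big)$ continued continuously). *)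

theory Defs
  imports "HOL-Analysis.Analysis"
begin

definition continuous_arctan_branch :: "real set \<Rightarrow> real \<Rightarrow> real \<Rightarrow> (real \<Rightarrow> real) \<Rightarrow> bool" where
  "continuous_arctan_branch J \<tau> \<Omega> A \<longleftrightarrow>
     continuous_on J A \<and> A 0 = 0 \<and>
     (\<forall>s\<in>J. cos (\<Omega> * s) \<noteq> 0 \<longrightarrow> tan (A s) = (\<tau> / \<Omega>) * tan (\<Omega> * s))"

end

theory Submission
  imports Defs
begin

text \<open>
  With \<open>\<Omega> = sqrt (E\<^sup>2 + \<tau>\<^sup>2)\<close>, the function \<open>u = sin \<vartheta>\<close> satisfies \<open>u'' = -\<Omega>\<^sup>2 u\<close>, so
  \<open>\<Omega> sin \<vartheta> = \<omega>(0) sin (\<Omega> s)\<close> with \<open>\<omega>(0)\<^sup>2 = E\<^sup>2\<close>, and therefore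
  \<open>\<Omega>\<^sup>2 cos\<^sup>2(\<Omega> s) + \<tau>\<^sup>2 sin\<^sup>2(\<Omega> s) = \<Omega>\<^sup>2 cos\<^sup>2 \<vartheta>\<close>. Hence \<open>B(s) = \<phi>(s) - \<phi>(0) + \<tau> s\<close> has
  derivative \<open>\<tau> / cos\<^sup>2 \<vartheta>\<close>, which is exactly the derivative of the polar angle of the
  curve \<open>(\<Omega> cos (\<Omega> s), \<tau> sin (\<Omega> s))\<close>; since both vanish at \<open>0\<close>, \<open>B\<close> is that polar angle,
  i.e. the continuous branch of \<open>arctan (\<tau>/\<Omega> tan (\<Omega> s))\<close>. Such a branch is unique:
  two branches have equal tangents off the isolated zeros of \<open>cos (\<Omega> s)\<close>, so their
  difference is a continuous function with values in \<open>(\<pi>/2) \<int>\<close> vanishing at \<open>0\<close>.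
\<close>

lemma zero_derivative_vanishes:
  fixes f :: "real \<Rightarrow> real"
  assumes "convex J" "a \<in> J" "f a = 0"
    and "\<And>s. s \<in> J \<Longrightarrow> (f has_real_derivative 0) (at s within J)"
    and "s \<in> J"
  shows "f s = 0"
  using has_field_derivative_zero_constant[OF assms(1,4)] assms(2,3,5) by metis

lemma harmonic_wronskian_eq:
  fixes u v :: "real \<Rightarrow> real"
  assumes "convex J" "0 \<in> J" "u 0 = 0"
    and u: "\<And>s. s \<in> J \<Longrightarrow> (u has_real_derivative v s) (at s within J)"
    and v: "\<And>s. s \<in> J \<Longrightarrow> (v has_real_derivative - W\<^sup>2 * u s) (at s within J)"
    and "s \<in> J"
  shows "W * u s * cos (W * s) = v s * sin (W * s)"
proof -
  define w where "w s = W * u s * cos (W * s) - v s * sin (W * s)" for s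
  have "w s = 0"
  proof (rule zero_derivative_vanishes[OF assms(1,2), where f = w])
    show "w 0 = 0" using assms(3) by (simp add: w_def)
    fix s assume s: "s \<in> J"
    show "(w has_real_derivative 0) (at s within J)"
      unfolding w_def
      by (rule derivative_eq_intros u[OF s] v[OF s] refl)+ (simp add: algebra_simps power2_eq_square)
  qed (fact assms(6))
  then show ?thesis by (simp add: w_def)
qed

lemma polar_angle_invariant:
  fixes x y B :: "real \<Rightarrow> real"
  assumes "convex J" "a \<in> J"
    and x: "\<And>s. s \<in> J \<Longrightarrow> (x has_real_derivative x' s) (at s within J)"
    and y: "\<And>s. s \<in> J \<Longrightarrow> (y has_real_derivative y' s) (at s within J)"
    and R: "\<And>s. s \<in> J \<Longrightarrow> (x s)\<^sup>2 + (y s)\<^sup>2 > 0"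
    and B: "\<And>s. s \<in> J \<Longrightarrow>
      (B has_real_derivative (x s * y' s - y s * x' s) / ((x s)\<^sup>2 + (y s)\<^sup>2)) (at s within J)"
    and init: "x a * sin (B a) = y a * cos (B a)"
    and "s \<in> J"
  shows "x s * sin (B s) = y s * cos (B s)"
proof -
  define N where "N s = x s * sin (B s) - y s * cos (B s)" for s
  define R where "R s = (x s)\<^sup>2 + (y s)\<^sup>2" for s
  \<comment> \<open>\<open>N / sqrt R\<close> is the sine of \<open>B\<close> minus the polar angle of \<open>(x, y)\<close>; both angles have
     the same derivative.\<close>
  have "(N s)\<^sup>2 / R s = 0"
  proof (rule zero_derivative_vanishes[OF assms(1,2), where f = "\<lambda>s. (N s)\<^sup>2 / R s"])
    fix s assume s: "s \<in> J"
    define B' where "B' = (x s * y' s - y s * x' s) / R s"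
    define N' where "N' = x' s * sin (B s) - y' s * cos (B s) + B' * (x s * cos (B s) + y s * sin (B s))"
    have "R s > 0" using R[OF s] by (simp add: R_def)
    then have "B' * R s = x s * y' s - y s * x' s" by (simp add: B'_def)
    then have key: "N' * R s = N s * (x s * x' s + y s * y' s)"
      unfolding N'_def N_def R_def by algebra
    have dB: "(B has_real_derivative B') (at s within J)"
      using B[OF s] by (simp add: B'_def R_def)
    have "(N has_real_derivative N') (at s within J)"
      unfolding N_def N'_def
      by (rule derivative_eq_intros x[OF s] y[OF s] dB refl)+ (simp add: algebra_simps)
    moreover have "(R has_real_derivative 2 * (x s * x' s + y s * y' s)) (at s within J)"
      unfolding R_def by (rule derivative_eq_intros x[OF s] y[OF s] refl)+ simp
    ultimately have "((\<lambda>s. (N s)\<^sup>2 / R s) has_real_derivative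
        (2 * N s * N' * R s - (N s)\<^sup>2 * (2 * (x s * x' s + y s * y' s))) / (R s)\<^sup>2) (at s within J)"
      using \<open>R s > 0\<close> by (auto intro!: derivative_eq_intros simp: power2_eq_square)
    also have "(2 * N s * N' * R s - (N s)\<^sup>2 * (2 * (x s * x' s + y s * y' s))) / (R s)\<^sup>2 = 0"
      using key by (simp add: power2_eq_square)
    finally show "((\<lambda>s. (N s)\<^sup>2 / R s) has_real_derivative 0) (at s within J)" .
  qed (use init assms in \<open>simp_all add: N_def\<close>)
  then show ?thesis using R[OF assms(8)] by (auto simp: N_def R_def)
qed

lemma sin_double_eq_0_if_tan_eq_0:
  fixes x :: real
  assumes "tan x = 0"
  shows "sin (2 * x) = 0"
  using assms by (auto simp: tan_def sin_double)

lemma sin_double_diff_eq_0_if_tan_eq: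
  fixes a b :: real
  assumes "tan a = tan b"
  shows "sin (2 * (a - b)) = 0"
proof (cases "cos a = 0 \<or> cos b = 0")
  case True
  \<comment> \<open>\<open>tan\<close> is \<open>0\<close> wherever \<open>cos\<close> vanishes.\<close>
  then have "tan a = 0" "tan b = 0" using assms by (auto simp: tan_def)
  then show ?thesis
    by (simp add: right_diff_distrib sin_diff sin_double_eq_0_if_tan_eq_0)
next
  case False
  then have "sin (a - b) = 0"
    using assms by (simp add: tan_def sin_diff frac_eq_eq algebra_simps)
  then show ?thesis by (simp only: sin_double mult_zero_left mult_zero_right)
qed

lemma continuous_sin_double_eq_0_imp_eq_0:
  fixes C :: "real \<Rightarrow> real"
  assumes "connected J" "a \<in> J" "s \<in> J" "C a = 0" "continuous_on J C"
    and "\<And>x. x \<in> J \<Longrightarrow> sin (2 * C x) = 0"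
  shows "C s = 0"
proof -
  have not_pos: "\<not> C' s > 0"
    if C': "continuous_on J C'" "C' a = (0::real)" "\<And>x. x \<in> J \<Longrightarrow> sin (2 * C' x) = 0" for C'
  proof
    assume pos: "C' s > 0"
    have "is_interval (C' ` J)"
      using connected_continuous_image[OF C'(1) assms(1)] is_interval_connected_1 by blast
    have "C' s \<ge> pi / 2"
    proof (rule ccontr)
      assume "\<not> C' s \<ge> pi / 2"
      then have "2 * C' s = 0"
        using sin_eq_0_pi[of "2 * C' s"] C'(3)[OF assms(3)] pos by simp
      then show False using pos by simp
    qed
    moreover have "0 \<in> C' ` J" "C' s \<in> C' ` J" using C'(2) assms(2,3) by force+
    ultimately have "pi / 4 \<in> C' ` J"
      using mem_is_interval_1_I[OF \<open>is_interval (C' ` J)\<close>, of 0 "C' s" "pi / 4"] pi_gt_zero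
      by linarith
    then obtain t where "t \<in> J" "C' t = pi / 4" by (auto simp del: image_iff)
    then have "2 * C' t = pi / 2" by simp
    then have "sin (2 * C' t) = 1" by (simp only: sin_pi_half)
    then show False using C'(3)[OF \<open>t \<in> J\<close>] by simp
  qed
  have "\<not> C s > 0" using not_pos assms(4-6) by blast
  moreover have "\<not> - C s > 0"
    using not_pos[of "\<lambda>x. - C x"] assms(4-6) by (auto intro: continuous_intros)
  ultimately show ?thesis by linarith
qed

lemma cos_diff_ne_0_if_cos_eq_0:
  fixes z d :: real
  assumes "cos z = 0" "d \<noteq> 0" "\<bar>d\<bar> < pi"
  shows "cos (z - d) \<noteq> 0"
proof -
  have "sin z \<noteq> 0" using assms(1) sin_cos_squared_add[of z] by auto
  moreover have "sin d \<noteq> 0" using sin_eq_0_pi[of d] assms(2,3) by (auto simp: abs_less_iff)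
  ultimately show ?thesis using assms(1) by (simp add: cos_diff)
qed

lemma closure_cos_ne_0:
  fixes W :: real
  assumes "convex J" "0 \<in> J" "x \<in> J"
  shows "x \<in> closure {y \<in> J. cos (W * y) \<noteq> 0}"
proof (cases "cos (W * x) = 0")
  case False
  then show ?thesis using assms(3) by (intro closure_subset[THEN subsetD]) simp
next
  case True
  then have Wx: "W * x \<noteq> 0" by auto
  \<comment> \<open>Approach \<open>x\<close> along the segment towards \<open>0\<close>, staying closer to \<open>W x\<close> than \<open>\<pi>\<close>,
     the distance to the neighbouring zeros of \<open>cos\<close>.\<close>
  define c where "c = 1 / (1 + \<bar>W * x\<bar>)"
  have c: "0 < c" "c < 1" "\<bar>W * x\<bar> * c < 1"
    using Wx by (simp_all add: c_def)
  define y where "y n = x - c * x * inverse (real (Suc n))" for n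
  have "y n \<in> {y \<in> J. cos (W * y) \<noteq> 0}" for n
  proof -
    define l where "l = c * inverse (real (Suc n))"
    have l: "0 < l" "l \<le> c"
      using c by (simp_all add: l_def mult_le_cancel_left1 inverse_le_1_iff)
    have "(1 - l) *\<^sub>R x + l *\<^sub>R 0 \<in> J"
      using convexD[OF assms(1,3,2), of "1 - l" l] l c by simp
    moreover have "y n = (1 - l) *\<^sub>R x + l *\<^sub>R 0"
      by (simp add: y_def l_def algebra_simps)
    moreover have "\<bar>W * x * l\<bar> < pi"
    proof -
      have "\<bar>W * x * l\<bar> \<le> \<bar>W * x\<bar> * c"
        using l by (simp add: abs_mult mult_left_mono)
      then show ?thesis using c pi_gt3 by linarith
    qed
    then have "cos (W * x - W * x * l) \<noteq> 0"
      using cos_diff_ne_0_if_cos_eq_0[OF True] Wx l(1) by simp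
    moreover have "W * y n = W * x - W * x * l"
      by (simp add: y_def l_def algebra_simps)
    ultimately show ?thesis by simp
  qed
  moreover have "y \<longlonglongrightarrow> x - c * x * 0"
    unfolding y_def by (intro tendsto_intros LIMSEQ_inverse_real_of_nat)
  ultimately show ?thesis
    unfolding closure_sequential by (intro exI[of _ y]) simp
qed

lemma continuous_arctan_branch_unique:
  assumes "convex J" "0 \<in> J" "s \<in> J"
    and A: "continuous_arctan_branch J \<tau> W A" and B: "continuous_arctan_branch J \<tau> W B"
  shows "A s = B s"
proof -
  define C where "C x = A x - B x" for x
  have C: "continuous_on J C"
    using A B unfolding C_def continuous_arctan_branch_def by (auto intro: continuous_intros)
  have "closedin (top_of_set J) {x \<in> J. sin (2 * C x) = 0}"
    using C by (intro continuous_closedin_preimage_constant continuous_intros)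
  then obtain T where T: "closed T" "{x \<in> J. sin (2 * C x) = 0} = J \<inter> T"
    unfolding closedin_closed by blast
  have "{y \<in> J. cos (W * y) \<noteq> 0} \<subseteq> T"
  proof safe
    fix y assume "y \<in> J" "cos (W * y) \<noteq> 0"
    then have "tan (A y) = tan (B y)" using A B by (simp add: continuous_arctan_branch_def)
    then have "sin (2 * C y) = 0" unfolding C_def by (rule sin_double_diff_eq_0_if_tan_eq)
    then show "y \<in> T" using T(2) \<open>y \<in> J\<close> by blast
  qed
  then have "closure {y \<in> J. cos (W * y) \<noteq> 0} \<subseteq> T"
    by (rule closure_minimal) (fact T(1))
  then have "sin (2 * C x) = 0" if "x \<in> J" for x
    using closure_cos_ne_0[OF assms(1,2) that] T(2) that by blast
  moreover have "C 0 = 0" using A B by (simp add: C_def continuous_arctan_branch_def)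
  ultimately have "C s = 0"
    using continuous_sin_double_eq_0_imp_eq_0[OF convex_connected[OF assms(1)] assms(2,3) _ C] by blast
  then show ?thesis by (simp add: C_def)
qed

lemma continuous_arctan_branchI:
  fixes A :: "real \<Rightarrow> real"
  assumes "continuous_on J A" "A 0 = 0" "W \<noteq> 0"
    and polar: "\<And>s. s \<in> J \<Longrightarrow> W * cos (W * s) * sin (A s) = \<tau> * sin (W * s) * cos (A s)"
  shows "continuous_arctan_branch J \<tau> W A"
  unfolding continuous_arctan_branch_def
proof (intro conjI ballI impI assms(1,2))
  fix s assume s: "s \<in> J" and cW: "cos (W * s) \<noteq> 0"
  have "cos (A s) \<noteq> 0"
  proof
    assume "cos (A s) = 0"
    then have "sin (A s) \<noteq> 0" using sin_cos_squared_add[of "A s"] by auto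
    then show False using polar[OF s] \<open>cos (A s) = 0\<close> \<open>W \<noteq> 0\<close> cW by simp
  qed
  then show "tan (A s) = \<tau> / W * tan (W * s)"
    using polar[OF s] \<open>W \<noteq> 0\<close> cW by (simp add: tan_def field_simps)
qed

lemma pendulum_polar_radius_sq:
  fixes \<tau> E W :: real and th om :: "real \<Rightarrow> real"
  assumes "convex J" "0 \<in> J" "s \<in> J"
    and cos_th: "\<And>s. s \<in> J \<Longrightarrow> cos (th s) \<noteq> 0"
    and ode1: "\<And>s. s \<in> J \<Longrightarrow> (th has_real_derivative om s) (at s within J)"
    and ode2: "\<And>s. s \<in> J \<Longrightarrow>
        (om has_real_derivative (- \<tau>\<^sup>2 * tan (th s) / (cos (th s))\<^sup>2)) (at s within J)"
    and init: "th 0 = 0"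
    and energy: "\<And>s. s \<in> J \<Longrightarrow> E\<^sup>2 = (om s)\<^sup>2 + \<tau>\<^sup>2 * (tan (th s))\<^sup>2"
    and W: "W\<^sup>2 = E\<^sup>2 + \<tau>\<^sup>2"
  shows "(W * cos (W * s))\<^sup>2 + (\<tau> * sin (W * s))\<^sup>2 = W\<^sup>2 * (cos (th s))\<^sup>2"
proof -
  have energy': "E\<^sup>2 * (cos (th s))\<^sup>2 = (om s)\<^sup>2 * (cos (th s))\<^sup>2 + \<tau>\<^sup>2 * (sin (th s))\<^sup>2"
    if "s \<in> J" for s
    using energy[OF that] cos_th[OF that] by (simp add: tan_def field_simps)
  have "W * sin (th s) * cos (W * s) = om s * cos (th s) * sin (W * s)"
  proof (rule harmonic_wronskian_eq[OF assms(1,2) _ _ _ assms(3)])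
    fix s assume s: "s \<in> J"
    show "((\<lambda>s. sin (th s)) has_real_derivative om s * cos (th s)) (at s within J)"
      by (rule derivative_eq_intros ode1[OF s] refl)+ simp
    have "\<tau>\<^sup>2 = (W\<^sup>2 - (om s)\<^sup>2) * (cos (th s))\<^sup>2"
      using energy'[OF s] W sin_cos_squared_add[of "th s"] by algebra
    then have accel: "- \<tau>\<^sup>2 * tan (th s) / (cos (th s))\<^sup>2 * cos (th s) - om s * sin (th s) * om s
        = - W\<^sup>2 * sin (th s)"
      using cos_th[OF s] by (simp add: tan_def field_simps power2_eq_square) algebra
    show "((\<lambda>s. om s * cos (th s)) has_real_derivative - W\<^sup>2 * sin (th s)) (at s within J)"
      by (rule derivative_eq_intros ode1[OF s] ode2[OF s] refl)+
        (use accel in \<open>simp add: algebra_simps\<close>)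
  qed (simp add: init)
  then show ?thesis
    using energy'[OF assms(3)] W sin_cos_squared_add[of "th s"] sin_cos_squared_add[of "W * s"]
    by algebra
qed

lemma pendulum_phase_arctan_branch:
  fixes \<tau> E W :: real and th om ph :: "real \<Rightarrow> real"
  assumes "convex J" "0 \<in> J" "W > 0"
    and cos_th: "\<And>s. s \<in> J \<Longrightarrow> cos (th s) \<noteq> 0"
    and ode1: "\<And>s. s \<in> J \<Longrightarrow> (th has_real_derivative om s) (at s within J)"
    and ode2: "\<And>s. s \<in> J \<Longrightarrow>
        (om has_real_derivative (- \<tau>\<^sup>2 * tan (th s) / (cos (th s))\<^sup>2)) (at s within J)"
    and init: "th 0 = 0"
    and energy: "\<And>s. s \<in> J \<Longrightarrow> E\<^sup>2 = (om s)\<^sup>2 + \<tau>\<^sup>2 * (tan (th s))\<^sup>2"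
    and W: "W\<^sup>2 = E\<^sup>2 + \<tau>\<^sup>2"
    and phi: "\<And>s. s \<in> J \<Longrightarrow> (ph has_real_derivative \<tau> * (tan (th s))\<^sup>2) (at s within J)"
  shows "continuous_arctan_branch J \<tau> W (\<lambda>s. ph s - ph 0 + \<tau> * s)"
proof -
  define B where "B s = ph s - ph 0 + \<tau> * s" for s
  define x where "x s = W * cos (W * s)" for s
  define y where "y s = \<tau> * sin (W * s)" for s
  define x' where "x' s = - W * W * sin (W * s)" for s
  define y' where "y' s = \<tau> * W * cos (W * s)" for s
  have dx: "(x has_real_derivative x' s) (at s within J)" for s
    unfolding x_def x'_def by (rule derivative_eq_intros refl)+ simp
  have dy: "(y has_real_derivative y' s) (at s within J)" for s
    unfolding y_def y'_def by (rule derivative_eq_intros refl)+ simp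
  have R: "(x s)\<^sup>2 + (y s)\<^sup>2 = W\<^sup>2 * (cos (th s))\<^sup>2" if "s \<in> J" for s
    unfolding x_def y_def
    by (rule pendulum_polar_radius_sq[OF assms(1,2) that cos_th ode1 ode2 init energy W])
  have R_pos: "(x s)\<^sup>2 + (y s)\<^sup>2 > 0" if "s \<in> J" for s
    using R[OF that] cos_th[OF that] \<open>W > 0\<close> by simp
  have dB: "(B has_real_derivative (x s * y' s - y s * x' s) / ((x s)\<^sup>2 + (y s)\<^sup>2)) (at s within J)"
    if s: "s \<in> J" for s
  proof -
    have "x s * y' s - y s * x' s = \<tau> * W\<^sup>2"
      unfolding x_def y_def x'_def y'_def using sin_cos_squared_add[of "W * s"] by algebra
    then have "(x s * y' s - y s * x' s) / ((x s)\<^sup>2 + (y s)\<^sup>2) = \<tau> * (inverse (cos (th s)))\<^sup>2"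
      unfolding R[OF s] using \<open>W > 0\<close> by (simp add: power_inverse divide_inverse)
    also have "\<dots> = \<tau> * (tan (th s))\<^sup>2 + \<tau>"
      by (simp flip: tan_sec[OF cos_th[OF s]] add: algebra_simps)
    finally have B': "(x s * y' s - y s * x' s) / ((x s)\<^sup>2 + (y s)\<^sup>2) = \<dots>" .
    show ?thesis
      unfolding B_def B' by (rule derivative_eq_intros phi[OF s] refl)+ simp
  qed
  have "x s * sin (B s) = y s * cos (B s)" if "s \<in> J" for s
  proof (rule polar_angle_invariant[OF assms(1,2) dx dy R_pos dB _ that])
    show "x 0 * sin (B 0) = y 0 * cos (B 0)" by (simp add: x_def y_def B_def)
  qed
  moreover have "continuous_on J B"
    using dB by (rule DERIV_continuous_on)
  ultimately show ?thesis
    unfolding B_def[abs_def] using \<open>W > 0\<close>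
    by (intro continuous_arctan_branchI) (auto simp: B_def x_def y_def)
qed

theorem lemma4p15:
  fixes \<tau> E :: real and J :: "real set" and th om ph :: "real \<Rightarrow> real"
  assumes J: "is_interval J" "0 \<in> J"
    and range: "\<And>s. s \<in> J \<Longrightarrow> th s \<in> {-pi/2 <..< pi/2}"
    and ode1: "\<And>s. s \<in> J \<Longrightarrow> (th has_real_derivative om s) (at s within J)"
    and ode2: "\<And>s. s \<in> J \<Longrightarrow>
        (om has_real_derivative (- \<tau>\<^sup>2 * tan (th s) / (cos (th s))\<^sup>2)) (at s within J)"
    and init: "th 0 = 0"
    and E: "E \<ge> 0" "\<And>s. s \<in> J \<Longrightarrow> E\<^sup>2 = (om s)\<^sup>2 + \<tau>\<^sup>2 * (tan (th s))\<^sup>2"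
    and pos: "E\<^sup>2 + \<tau>\<^sup>2 > 0"
    and phi: "\<And>s. s \<in> J \<Longrightarrow> (ph has_real_derivative \<tau> * (tan (th s))\<^sup>2) (at s within J)"
  shows "(\<exists>A. continuous_arctan_branch J \<tau> (sqrt (E\<^sup>2 + \<tau>\<^sup>2)) A) \<and>
         (\<forall>A. continuous_arctan_branch J \<tau> (sqrt (E\<^sup>2 + \<tau>\<^sup>2)) A \<longrightarrow>
              (\<forall>s\<in>J. ph s - ph 0 = A s - \<tau> * s))"
proof -
  define W where "W = sqrt (E\<^sup>2 + \<tau>\<^sup>2)"
  have W: "W > 0" "W\<^sup>2 = E\<^sup>2 + \<tau>\<^sup>2" using pos by (simp_all add: W_def)
  have "convex J" using J(1) by (simp add: is_interval_convex_1)
  have cos_th: "cos (th s) \<noteq> 0" if "s \<in> J" for s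
    using range[OF that] cos_gt_zero_pi[of "th s"] by auto
  have branch: "continuous_arctan_branch J \<tau> W (\<lambda>s. ph s - ph 0 + \<tau> * s)"
    using pendulum_phase_arctan_branch[OF \<open>convex J\<close> J(2) W(1) cos_th ode1 ode2 init E(2) W(2) phi] .
  show ?thesis unfolding W_def[symmetric]
  proof (intro conjI allI impI ballI)
    show "\<exists>A. continuous_arctan_branch J \<tau> W A" using branch by blast
    fix A s assume "continuous_arctan_branch J \<tau> W A" "s \<in> J"
    then have "A s = ph s - ph 0 + \<tau> * s"
      using continuous_arctan_branch_unique[OF \<open>convex J\<close> J(2) _ _ branch] by blast
    then show "ph s - ph 0 = A s - \<tau> * s" by simp
  qed
qed

end
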